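(* Let $n,d,J$ be positive integers with $n\geqslant d\geqslant2$, and let $\delta,\vartheta>0$. For every $j\in[J]$ let $\boldsymbol{X}_j=\langle X^j_s:s\in\binom{[n]}{d}\rangle$ be a boolean, spreadable, $d$-dimensional random array on $[n]$ which is $(\vartheta,\{1\})$-box independent and satisfies $|\mathbb{E}[X^j_s]-\delta|\leqslant\vartheta$ for all $s\in\binom{[n]}{d}$. If $\boldsymbol{X}$ is any mixture of $\boldsymbol{X}_1,\dots,\boldsymbol{X}_J$, then $\boldsymbol{X}$ is $(2^{d+2}\vartheta,\{1\})$-box independent.
   Context: $[n]=\{1,\dots,n\}$, $\binom{I}{d}$ is the set of $d$-element subsets of $I$. A random array is spreadable if for all $J,K\subseteq[n]$ with $|J|=|K|\geqslant d$, the subarrays $\langle X_s:s\in\binom{J}{d}\rangle$ and $\langle X_s:s\in\binom{K}{d}\rangle$ have the same law (identified via the increasing bijection $J\to K$). A mixture of $\boldsymbol{X}_1,\dots,\boldsymbol{X}_J$ is a boolean $d$-dimensional random array $\boldsymbol{X}=\langle X_s:s\in\binom{[n]}{d}\rangle$ such that for some convex coefficients $\lambda_1,\dots,\lambda_J$, $\mathbb{E}[\prod_{s\in\mathcal{F}}X_s]=\sum_{j=1}^J\lambda_j\mathbb{E}[\prod_{s\in\mathcal{F}}X^j_s]$ for every nonempty $\mathcal{F}\subseteq\binom{[n]}{d}$. A $d$-dimensional box of $[n]$ is $\{s\in\binom{[n]}{d}:|s\cap H_i|=1\ \forall i\in[d]\}$ for 2-element sets $H_1,\dots,H_d\subseteq[n]$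 with $\max(H_i)<\min(H_{i+1})$. A boolean array $\boldsymbol{X}$ is $(\vartheta,\{1\})$-box independent if for every $d$-dimensional box $B$ of $[n]$, $\mathbb{P}(\bigcap_{s\in B}[X_s=1])\leqslant\prod_{s\in B}\mathbb{P}([X_s=1])+\vartheta$ (vacuous if there is no such box). *)

theory Defs
  imports "HOL-Probability.Probability"
begin

definition subsets_card :: "nat set \<Rightarrow> nat \<Rightarrow> nat set set" where
  "subsets_card I d = {s. s \<subseteq> I \<and> card s = d}"

definition bool_array :: "'a measure \<Rightarrow> nat \<Rightarrow> nat \<Rightarrow> (nat set \<Rightarrow> 'a \<Rightarrow> bool) \<Rightarrow> bool" where
  "bool_array M n d X \<longleftrightarrow> prob_space M \<and>
     (\<forall>s \<in> subsets_card {1..n} d. X s \<in> M \<rightarrow>\<^sub>M count_space UNIV)"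

definition spreadable :: "'a measure \<Rightarrow> nat \<Rightarrow> nat \<Rightarrow> (nat set \<Rightarrow> 'a \<Rightarrow> bool) \<Rightarrow> bool" where
  "spreadable M n d X \<longleftrightarrow>
     (\<forall>J K (\<phi>::nat \<Rightarrow> nat). J \<subseteq> {1..n} \<and> K \<subseteq> {1..n} \<and> card J = card K \<and> d \<le> card J
        \<and> bij_betw \<phi> J K \<and> strict_mono_on J \<phi> \<longrightarrow>
        distr M (PiM (subsets_card J d) (\<lambda>_. count_space UNIV))
               (\<lambda>\<omega>. \<lambda>s \<in> subsets_card J d. X s \<omega>)
      = distr M (PiM (subsets_card J d) (\<lambda>_. count_space UNIV))
               (\<lambda>\<omega>. \<lambda>s \<in> subsets_card J d. X (\<phi> ` s) \<omega>))"

definition box_sets :: "nat \<Rightarrow> nat \<Rightarrow> (nat \<Rightarrow> nat set) \<Rightarrow> bool" where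
  "box_sets n d H \<longleftrightarrow>
     (\<forall>i \<in> {1..d}. H i \<subseteq> {1..n} \<and> card (H i) = 2) \<and>
     (\<forall>i \<in> {1..<d}. Max (H i) < Min (H (Suc i)))"

definition box :: "nat \<Rightarrow> nat \<Rightarrow> (nat \<Rightarrow> nat set) \<Rightarrow> nat set set" where
  "box n d H = {s \<in> subsets_card {1..n} d. \<forall>i \<in> {1..d}. card (s \<inter> H i) = 1}"

definition is_box :: "nat \<Rightarrow> nat \<Rightarrow> nat set set \<Rightarrow> bool" where
  "is_box n d B \<longleftrightarrow> (\<exists>H. box_sets n d H \<and> B = box n d H)"

definition box_indep :: "'a measure \<Rightarrow> nat \<Rightarrow> nat \<Rightarrow> (nat set \<Rightarrow> 'a \<Rightarrow> bool) \<Rightarrow> real \<Rightarrow> bool" where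
  "box_indep M n d X \<theta> \<longleftrightarrow>
     (\<forall>B. is_box n d B \<longrightarrow>
        measure M {\<omega> \<in> space M. \<forall>s \<in> B. X s \<omega>}
          \<le> (\<Prod>s \<in> B. measure M {\<omega> \<in> space M. X s \<omega>}) + \<theta>)"

definition is_mixture ::
  "'b measure \<Rightarrow> nat \<Rightarrow> nat \<Rightarrow> (nat set \<Rightarrow> 'b \<Rightarrow> bool) \<Rightarrow> nat
     \<Rightarrow> (nat \<Rightarrow> 'a measure) \<Rightarrow> (nat \<Rightarrow> nat set \<Rightarrow> 'a \<Rightarrow> bool) \<Rightarrow> bool" where
  "is_mixture M n d X J Ms Xs \<longleftrightarrow>
     (\<exists>c::nat \<Rightarrow> real. (\<forall>j \<in> {1..J}. 0 \<le> c j) \<and> (\<Sum>j = 1..J. c j) = 1 \<and>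
        (\<forall>F. F \<noteq> {} \<and> F \<subseteq> subsets_card {1..n} d \<longrightarrow>
           (\<integral>\<omega>. (\<Prod>s \<in> F. of_bool (X s \<omega>)) \<partial>M)
             = (\<Sum>j = 1..J. c j * (\<integral>\<omega>. (\<Prod>s \<in> F. of_bool (Xs j s \<omega>)) \<partial>Ms j))))"

end

theory Submission
  imports Defs
begin

text \<open>Every marginal of every component lies within \<open>\<theta>\<close> of \<open>\<delta>\<close>, and so does every
  marginal of the mixture, being a convex combination of them; hence the marginals of each
  component and of the mixture differ by at most \<open>2\<theta>\<close>. A box has at most \<open>2^d\<close> entries, so
  box independence of a component bounds its box probability by the product of the mixture
  marginals plus \<open>2^d \<cdot> 2\<theta> + \<theta>\<close>, and averaging over the components with the mixture weights
  gives the bound for the mixture.\<close>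

lemma prod_le_prod_add_card_mult:
  fixes a b :: "'i \<Rightarrow> real" and \<epsilon> :: real
  assumes "\<And>i. i \<in> I \<Longrightarrow> \<bar>a i\<bar> \<le> 1" "\<And>i. i \<in> I \<Longrightarrow> \<bar>b i\<bar> \<le> 1"
    and "\<And>i. i \<in> I \<Longrightarrow> \<bar>a i - b i\<bar> \<le> \<epsilon>"
  shows "(\<Prod>i\<in>I. a i) \<le> (\<Prod>i\<in>I. b i) + card I * \<epsilon>"
proof -
  have "\<bar>(\<Prod>i\<in>I. a i) - (\<Prod>i\<in>I. b i)\<bar> \<le> (\<Sum>i\<in>I. \<bar>a i - b i\<bar>)"
    using norm_prod_diff[of I a b] assms(1,2) by simp
  also have "\<dots> \<le> card I * \<epsilon>"
    using assms(3) by (rule sum_bounded_above)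
  finally show ?thesis by linarith
qed

lemma box_sets_finite_nonempty:
  assumes "box_sets n d H" "i \<in> {1..d}"
  shows "finite (H i)" "H i \<noteq> {}"
proof -
  have "card (H i) = 2" using assms by (simp add: box_sets_def)
  then show "finite (H i)" "H i \<noteq> {}" by (auto intro: card_ge_0_finite)
qed

lemma box_sets_Max_less_Min:
  assumes H: "box_sets n d H" and "i \<in> {1..d}" "j \<in> {1..d}" "i < j"
  shows "Max (H i) < Min (H j)"
  using assms(3,4)
proof (induction j)
  case 0
  then show ?case by simp
next
  case (Suc j)
  have consecutive: "Max (H k) < Min (H (Suc k))" if "k \<in> {1..<d}" for k
    using H that by (simp add: box_sets_def)
  show ?case
  proof (cases "i = j")
    case True
    then show ?thesis using Suc.prems assms(2) consecutive by simp
  next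
    case False
    then have "i < j" "j \<in> {1..d}" "j \<in> {1..<d}" using Suc.prems assms(2) by auto
    moreover have "Min (H j) \<le> Max (H j)"
      using box_sets_finite_nonempty[OF H \<open>j \<in> {1..d}\<close>] by (intro Min_le Max_in)
    ultimately have "Max (H i) < Min (H j)" "Min (H j) \<le> Max (H j)" "Max (H j) < Min (H (Suc j))"
      using Suc.IH consecutive by auto
    then show ?thesis by linarith
  qed
qed

lemma box_sets_disjoint:
  assumes H: "box_sets n d H" and "i \<in> {1..d}" "j \<in> {1..d}" "i \<noteq> j"
  shows "H i \<inter> H j = {}"
proof -
  have "H k \<inter> H l = {}" if "k \<in> {1..d}" "l \<in> {1..d}" "k < l" for k l
    using box_sets_Max_less_Min[OF H that] box_sets_finite_nonempty[OF H] that
    by (meson Max_ge Min_le disjoint_iff le_less_trans not_le)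
  then show ?thesis
    using assms(2-4) by (metis inf_commute linorder_neq_iff)
qed

lemma box_member_eq_UN:
  assumes H: "box_sets n d H" and s: "s \<in> box n d H"
  shows "s = (\<Union>i\<in>{1..d}. s \<inter> H i)"
proof (rule card_subset_eq[symmetric])
  have s_props: "finite s" "card s = d" "\<And>i. i \<in> {1..d} \<Longrightarrow> card (s \<inter> H i) = 1"
    using s by (auto simp: box_def subsets_card_def intro: finite_subset)
  then show "finite s" by simp
  show "(\<Union>i\<in>{1..d}. s \<inter> H i) \<subseteq> s" by blast
  have "card (\<Union>i\<in>{1..d}. s \<inter> H i) = (\<Sum>i\<in>{1..d}. card (s \<inter> H i))"
  proof (rule card_UN_disjoint)
    show "\<forall>i\<in>{1..d}. \<forall>j\<in>{1..d}. i \<noteq> j \<longrightarrow> (s \<inter> H i) \<inter> (s \<inter> H j) = {}"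
      using box_sets_disjoint[OF H] by blast
  qed (use s_props(1) in auto)
  then show "card (\<Union>i\<in>{1..d}. s \<inter> H i) = card s"
    using s_props by simp
qed

lemma card_box_le:
  assumes H: "box_sets n d H"
  shows "card (box n d H) \<le> 2 ^ d"
proof -
  define traces where "traces s = (\<lambda>i\<in>{1..d}. s \<inter> H i)" for s
  define singletons where "singletons = (\<Pi>\<^sub>E i\<in>{1..d}. (\<lambda>x. {x}) ` H i)"
  have "inj_on traces (box n d H)"
  proof (rule inj_onI)
    fix s t assume "s \<in> box n d H" "t \<in> box n d H" "traces s = traces t"
    then show "s = t"
      using box_member_eq_UN[OF H] by (metis (no_types, lifting) SUP_cong restrict_apply' traces_def)
  qed
  moreover have "traces ` box n d H \<subseteq> singletons"
  proof clarify
    fix s assume s: "s \<in> box n d H"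
    have "s \<inter> H i \<in> (\<lambda>x. {x}) ` H i" if i: "i \<in> {1..d}" for i
    proof -
      have "card (s \<inter> H i) = 1" using s i by (simp add: box_def)
      then obtain x where "s \<inter> H i = {x}" by (rule card_1_singletonE)
      then show ?thesis by auto
    qed
    then show "traces s \<in> singletons" by (simp add: traces_def singletons_def)
  qed
  moreover have "finite singletons"
    using box_sets_finite_nonempty[OF H] by (auto simp: singletons_def intro!: finite_PiE)
  ultimately have "card (box n d H) \<le> card singletons"
    by (meson card_inj_on_le)
  also have "card singletons = (\<Prod>i\<in>{1..d}. card ((\<lambda>x. {x}) ` H i))"
    by (simp add: singletons_def card_PiE)
  also have "\<dots> = 2 ^ d"
    using H by (simp add: box_sets_def card_image)
  finally show ?thesis .
qed

lemma is_box_subset_subsets_card: "is_box n d B \<Longrightarrow> B \<subseteq> subsets_card {1..n} d"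
  by (auto simp: is_box_def box_def)

lemma box_indep_perturb_marginals:
  fixes q :: "nat set \<Rightarrow> real" and \<epsilon> :: real
  assumes "prob_space N" "box_indep N n d Y \<theta>" "is_box n d B" "0 \<le> \<epsilon>"
    and "\<And>s. s \<in> B \<Longrightarrow> \<bar>q s\<bar> \<le> 1"
    and "\<And>s. s \<in> B \<Longrightarrow> \<bar>measure N {\<omega>\<in>space N. Y s \<omega>} - q s\<bar> \<le> \<epsilon>"
  shows "measure N {\<omega>\<in>space N. \<forall>s\<in>B. Y s \<omega>} \<le> (\<Prod>s\<in>B. q s) + 2 ^ d * \<epsilon> + \<theta>"
proof -
  have "measure N {\<omega>\<in>space N. \<forall>s\<in>B. Y s \<omega>} \<le> (\<Prod>s\<in>B. measure N {\<omega>\<in>space N. Y s \<omega>}) + \<theta>"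
    using assms(2,3) unfolding box_indep_def by blast
  also have "(\<Prod>s\<in>B. measure N {\<omega>\<in>space N. Y s \<omega>}) \<le> (\<Prod>s\<in>B. q s) + card B * \<epsilon>"
    using assms(1,5,6) by (intro prod_le_prod_add_card_mult) (auto simp: prob_space.prob_le_1)
  also have "card B * \<epsilon> \<le> 2 ^ d * \<epsilon>"
  proof -
    obtain H where "box_sets n d H" "B = box n d H"
      using assms(3) unfolding is_box_def by blast
    then have "card B \<le> 2 ^ d" by (simp add: card_box_le)
    then show ?thesis
      using assms(4) by (intro mult_right_mono) (auto simp: numeral_power_le_of_nat_cancel_iff)
  qed
  finally show ?thesis by simp
qed

lemma integral_prod_of_bool:
  assumes "finite F"
  shows "(\<integral>\<omega>. (\<Prod>s\<in>F. of_bool (P s \<omega>) :: real) \<partial>N) = measure N {\<omega>\<in>space N. \<forall>s\<in>F. P s \<omega>}"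
proof -
  have "(\<integral>\<omega>. (\<Prod>s\<in>F. of_bool (P s \<omega>) :: real) \<partial>N)
      = (\<integral>\<omega>. indicator {\<omega>\<in>space N. \<forall>s\<in>F. P s \<omega>} \<omega> \<partial>N)"
    using assms by (intro Bochner_Integration.integral_cong) (auto simp: prod.neutral indicator_def)
  then show ?thesis
    by (simp add: Int_absorb2 subset_eq)
qed

lemma integral_of_bool:
  "(\<integral>\<omega>. (of_bool (P \<omega>) :: real) \<partial>N) = measure N {\<omega>\<in>space N. P \<omega>}"
  using integral_prod_of_bool[where F="{()}" and P="\<lambda>_. P"] by simp

lemma finite_subsets_card: "finite I \<Longrightarrow> finite (subsets_card I d)"
  unfolding subsets_card_def by (rule finite_subset[of _ "Pow I"]) auto

lemma is_mixtureE:
  assumes mixture: "is_mixture M n d X J Ms Xs"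
    and "prob_space M" and "\<And>j. j \<in> {1..J} \<Longrightarrow> prob_space (Ms j)"
  obtains c :: "nat \<Rightarrow> real"
  where "\<And>j. j \<in> {1..J} \<Longrightarrow> 0 \<le> c j" and "(\<Sum>j = 1..J. c j) = 1"
    and "\<And>F. F \<subseteq> subsets_card {1..n} d \<Longrightarrow> measure M {\<omega>\<in>space M. \<forall>s\<in>F. X s \<omega>}
           = (\<Sum>j = 1..J. c j * measure (Ms j) {\<omega>\<in>space (Ms j). \<forall>s\<in>F. Xs j s \<omega>})"
proof -
  obtain c :: "nat \<Rightarrow> real" where c: "\<forall>j \<in> {1..J}. 0 \<le> c j" "(\<Sum>j = 1..J. c j) = 1"
    "\<forall>F. F \<noteq> {} \<and> F \<subseteq> subsets_card {1..n} d \<longrightarrow>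
       (\<integral>\<omega>. (\<Prod>s \<in> F. of_bool (X s \<omega>)) \<partial>M)
         = (\<Sum>j = 1..J. c j * (\<integral>\<omega>. (\<Prod>s \<in> F. of_bool (Xs j s \<omega>)) \<partial>Ms j))"
    using mixture unfolding is_mixture_def by blast
  have "measure M {\<omega>\<in>space M. \<forall>s\<in>F. X s \<omega>}
      = (\<Sum>j = 1..J. c j * measure (Ms j) {\<omega>\<in>space (Ms j). \<forall>s\<in>F. Xs j s \<omega>})"
    if F: "F \<subseteq> subsets_card {1..n} d" for F
  proof (cases "F = {}")
    case True
    then show ?thesis
      using assms(2,3) c(2) by (simp add: prob_space.prob_space)
  next
    case False
    have "finite F"
      using F finite_subsets_card[of "{1..n}" d] by (rule finite_subset) simp
    then show ?thesis
      using c(3)[rule_format, OF conjI[OF False F]] by (simp add: integral_prod_of_bool)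
  qed
  with c show thesis using that by blast
qed

theorem proposition8p4:
  fixes n d J :: nat and \<delta> \<theta> :: real
    and Ms :: "nat \<Rightarrow> 'a measure" and Xs :: "nat \<Rightarrow> nat set \<Rightarrow> 'a \<Rightarrow> bool"
    and M :: "'b measure" and X :: "nat set \<Rightarrow> 'b \<Rightarrow> bool"
  assumes "0 < J" and "2 \<le> d" and "d \<le> n" and "0 < \<delta>" and "0 < \<theta>"
    and "\<And>j. j \<in> {1..J} \<Longrightarrow> bool_array (Ms j) n d (Xs j)"
    and "\<And>j. j \<in> {1..J} \<Longrightarrow> spreadable (Ms j) n d (Xs j)"
    and "\<And>j. j \<in> {1..J} \<Longrightarrow> box_indep (Ms j) n d (Xs j) \<theta>"
    and "\<And>j s. j \<in> {1..J} \<Longrightarrow> s \<in> subsets_card {1..n} d \<Longrightarrow>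
           \<bar>(\<integral>\<omega>. of_bool (Xs j s \<omega>) \<partial>Ms j) - \<delta>\<bar> \<le> \<theta>"
    and "bool_array M n d X"
    and "is_mixture M n d X J Ms Xs"
  shows "box_indep M n d X (2 ^ (d + 2) * \<theta>)"
  unfolding box_indep_def
proof (intro allI impI)
  fix B assume box: "is_box n d B"
  have B: "B \<subseteq> subsets_card {1..n} d"
    using box by (rule is_box_subset_subsets_card)
  have prob: "prob_space M" "\<And>j. j \<in> {1..J} \<Longrightarrow> prob_space (Ms j)"
    using assms(6,10) by (auto simp: bool_array_def)
  obtain c where c: "\<And>j. j \<in> {1..J} \<Longrightarrow> 0 \<le> c j" "(\<Sum>j = 1..J. c j) = 1"
    "\<And>F. F \<subseteq> subsets_card {1..n} d \<Longrightarrow> measure M {\<omega>\<in>space M. \<forall>s\<in>F. X s \<omega>}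
       = (\<Sum>j = 1..J. c j * measure (Ms j) {\<omega>\<in>space (Ms j). \<forall>s\<in>F. Xs j s \<omega>})"
    using is_mixtureE[OF assms(11) prob] by blast
  define q where "q s = measure M {\<omega>\<in>space M. X s \<omega>}" for s
  define p where "p j s = measure (Ms j) {\<omega>\<in>space (Ms j). Xs j s \<omega>}" for j s
  have p_near: "p j s \<in> cball \<delta> \<theta>" if "j \<in> {1..J}" "s \<in> B" for j s
    using assms(9) that B by (auto simp: p_def integral_of_bool dist_real_def abs_minus_commute)
  have q_near: "q s \<in> cball \<delta> \<theta>" if "s \<in> B" for s
    using c(3)[of "{s}"] that B convex_sum[OF _ convex_cball c(2) c(1) p_near[OF _ that]]
    by (auto simp: q_def p_def)
  have "measure (Ms j) {\<omega>\<in>space (Ms j). \<forall>s\<in>B. Xs j s \<omega>} \<le> (\<Prod>s\<in>B. q s) + 2 ^ (d + 2) * \<theta>"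
    if j: "j \<in> {1..J}" for j
  proof -
    have "measure (Ms j) {\<omega>\<in>space (Ms j). \<forall>s\<in>B. Xs j s \<omega>} \<le> (\<Prod>s\<in>B. q s) + 2 ^ d * (2 * \<theta>) + \<theta>"
    proof (rule box_indep_perturb_marginals[OF prob(2)[OF j] assms(8)[OF j] box])
      fix s assume s: "s \<in> B"
      show "\<bar>q s\<bar> \<le> 1"
        using prob(1) by (simp add: q_def prob_space.prob_le_1)
      show "\<bar>measure (Ms j) {\<omega>\<in>space (Ms j). Xs j s \<omega>} - q s\<bar> \<le> 2 * \<theta>"
        using p_near[OF j s] q_near[OF s] by (simp add: p_def dist_real_def abs_le_iff)
    qed (use assms(5) in simp)
    moreover have "\<theta> \<le> 2 ^ d * (2 * \<theta>)"
      using assms(5) by (simp add: mult_le_cancel_right1) (use one_le_power[of "2::real" d] in linarith)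
    ultimately show ?thesis by simp
  qed
  then show "measure M {\<omega>\<in>space M. \<forall>s\<in>B. X s \<omega>} \<le> (\<Prod>s\<in>B. q s) + 2 ^ (d + 2) * \<theta>"
    using c(3)[OF B] convex_sum[OF _ convex_real_interval(2) c(2) c(1)] by auto
qed

end
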